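(* Let $C\ge0$, $m\ge1$, $S_0,\dots,S_m$, $\lambda_0,\dots,\lambda_m$ and $f=\sum_{j=0}^m\lambda_j2^{-j/2}\chi_{S_j}$ be as in the setting below. Then for every integer $\tau\ge0$, \[ \sum_{Q\in\mathcal{Q}^\tau}f(Q)\lesssim\max_{\alpha,\beta\in\{1,2,3\}}\ \sum_{\substack{Q=(\xi_1,\xi_2,\xi_3,\xi_4)\in\mathcal{Q}^0_{\alpha,\beta}\\ \gcd(\xi_1-\xi_4)\mid\tau}}f(Q)+\|f\|_{\ell^2(\mathbb{Z}^2)}^4, \] with an absolute implicit constant.
   Context: Setting: $C\ge0$ is fixed, $m\ge1$ an integer, $S_0,\dots,S_m\subset\mathbb{Z}^2$ pairwise disjoint with $\#S_j\le2^j$, $\lambda_j\ge0$, $f=\sum_{j=0}^m\lambda_j2^{-j/2}\chi_{S_j}$, and for each $j$ and $\xi\in S_j$ there is at most one line $\ell\ni\xi$ with $\#(\ell\cap S_j)\ge2^{j/2+C}$. A parallelogram is a quadruple $Q=(\xi_1,\xi_2,\xi_3,\xi_4)\in(\mathbb{Z}^2)^4$ with $\xi_1+\xi_3=\xi_2+\xi_4$; $\tau_Q:=2|(\xi_1-\xi_2)\cdot(\xi_1-\xi_4)|$; $\mathcal{Q}^\tau$ is the set of parallelograms with $\tau_Q=\tau$; $f(Q):=f(\xi_1)f(\xi_2)f(\xi_3)f(\xi_4)$. For $(a,b)\in\mathbb{Z}^2\setminus\{0\}$, $\gcd((a,b)):=\gcd(a,b)$ (every integer divides $0$). A cross is a triple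 $(\xi,\ell_1,\ell_2)$ of two mutually orthogonal lines $\ell_1,\ell_2\subset\mathbb{R}^2$ meeting at $\xi$. For a cross with $\xi\in S_j$, let $a=\log_2\max\{\#(\ell_1\cap S_j),\#(\ell_2\cap S_j)\}$; the cross is of type 1 if $a\ge j/2+C$, type 2 if $1\le a<j/2+C$, type 3 if $a=0$. For a rectangle $(\xi_1,\xi_2,\xi_3,\xi_4)\in\mathcal{Q}^0$ with four distinct vertices, vertex $\xi_k$ (indices mod 4) is of type $\alpha$ if the cross $(\xi_k,\overleftrightarrow{\xi_k\xi_{k-1}},\overleftrightarrow{\xi_k\xi_{k+1}})$ is of type $\alpha$, where $\overleftrightarrow{\eta\zeta}$ is the line through $\eta,\zeta$. $\mathcal{Q}^0_{\alpha,\beta}$ is the set of rectangles in $\mathcal{Q}^0$ with four distinct vertices all in $\bigcup_jS_j$ such that $\xi_1,\xi_2$ are of type $\alpha$ and $\xi_3,\xi_4$ are of type $\beta$. *)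

theory Defs
  imports "HOL-Analysis.Analysis"
begin

type_synonym pt2 = "int \<times> int"
type_synonym quad = "pt2 \<times> pt2 \<times> pt2 \<times> pt2"

definition rpt :: "pt2 \<Rightarrow> real \<times> real" where
  "rpt \<xi> = (real_of_int (fst \<xi>), real_of_int (snd \<xi>))"

definition line_dir :: "(real \<times> real) set \<Rightarrow> real \<times> real \<Rightarrow> bool" where
  "line_dir L v \<longleftrightarrow> v \<noteq> 0 \<and> (\<exists>p. L = {p + t *\<^sub>R v | t. True})"

definition is_line :: "(real \<times> real) set \<Rightarrow> bool" where
  "is_line L \<longleftrightarrow> (\<exists>v. line_dir L v)"

definition line_through :: "pt2 \<Rightarrow> pt2 \<Rightarrow> (real \<times> real) set" where
  "line_through \<eta> \<zeta> = {rpt \<eta> + t *\<^sub>R (rpt \<zeta> - rpt \<eta>) | t. True}"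

definition lat_count :: "(real \<times> real) set \<Rightarrow> pt2 set \<Rightarrow> nat" where
  "lat_count L A = card {\<xi> \<in> A. rpt \<xi> \<in> L}"

definition is_cross :: "pt2 \<Rightarrow> (real \<times> real) set \<Rightarrow> (real \<times> real) set \<Rightarrow> bool" where
  "is_cross \<xi> l1 l2 \<longleftrightarrow> (\<exists>v1 v2. line_dir l1 v1 \<and> line_dir l2 v2 \<and> inner v1 v2 = 0)
      \<and> rpt \<xi> \<in> l1 \<and> rpt \<xi> \<in> l2"

definition cross_a :: "pt2 set \<Rightarrow> (real \<times> real) set \<Rightarrow> (real \<times> real) set \<Rightarrow> real" where
  "cross_a A l1 l2 = log 2 (real (max (lat_count l1 A) (lat_count l2 A)))"

definition cross_type :: "real \<Rightarrow> nat \<Rightarrow> pt2 set \<Rightarrow> (real \<times> real) set \<Rightarrow> (real \<times> real) set \<Rightarrow> nat \<Rightarrow> bool" where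
  "cross_type C j A l1 l2 \<alpha> \<longleftrightarrow>
     (let a = cross_a A l1 l2 in
       (\<alpha> = 1 \<and> a \<ge> real j / 2 + C) \<or>
       (\<alpha> = 2 \<and> 1 \<le> a \<and> a < real j / 2 + C) \<or>
       (\<alpha> = 3 \<and> a = 0))"

definition vertex_type :: "real \<Rightarrow> nat \<Rightarrow> (nat \<Rightarrow> pt2 set) \<Rightarrow> pt2 \<Rightarrow> pt2 \<Rightarrow> pt2 \<Rightarrow> nat \<Rightarrow> bool" where
  "vertex_type C m S xprev \<xi> xnext \<alpha> \<longleftrightarrow>
     (\<exists>j\<le>m. \<xi> \<in> S j \<and> cross_type C j (S j) (line_through \<xi> xprev) (line_through \<xi> xnext) \<alpha>)"

definition is_parallelogram :: "quad \<Rightarrow> bool" where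
  "is_parallelogram Q = (case Q of (\<xi>1, \<xi>2, \<xi>3, \<xi>4) \<Rightarrow> \<xi>1 + \<xi>3 = \<xi>2 + \<xi>4)"

definition dot2 :: "pt2 \<Rightarrow> pt2 \<Rightarrow> int" where
  "dot2 a b = fst a * fst b + snd a * snd b"

definition tauQ :: "quad \<Rightarrow> int" where
  "tauQ Q = (case Q of (\<xi>1, \<xi>2, \<xi>3, \<xi>4) \<Rightarrow> 2 * \<bar>dot2 (\<xi>1 - \<xi>2) (\<xi>1 - \<xi>4)\<bar>)"

definition gcd2 :: "pt2 \<Rightarrow> int" where
  "gcd2 v = gcd (fst v) (snd v)"

definition fS :: "nat \<Rightarrow> (nat \<Rightarrow> pt2 set) \<Rightarrow> (nat \<Rightarrow> real) \<Rightarrow> pt2 \<Rightarrow> real" where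
  "fS m S lam \<xi> = (\<Sum>j\<le>m. lam j * 2 powr (- real j / 2) * (if \<xi> \<in> S j then 1 else 0))"

definition fQ :: "(pt2 \<Rightarrow> real) \<Rightarrow> quad \<Rightarrow> real" where
  "fQ f Q = (case Q of (\<xi>1, \<xi>2, \<xi>3, \<xi>4) \<Rightarrow> f \<xi>1 * f \<xi>2 * f \<xi>3 * f \<xi>4)"

text \<open>Quadruples with all vertices in U (f(Q) = 0 otherwise when U is the support set).\<close>
definition quads_in :: "pt2 set \<Rightarrow> quad set" where
  "quads_in U = U \<times> U \<times> U \<times> U"

definition Q0_ab :: "real \<Rightarrow> nat \<Rightarrow> (nat \<Rightarrow> pt2 set) \<Rightarrow> nat \<Rightarrow> nat \<Rightarrow> quad set" where
  "Q0_ab C m S \<alpha> \<beta> = {(\<xi>1, \<xi>2, \<xi>3, \<xi>4) | \<xi>1 \<xi>2 \<xi>3 \<xi>4.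
      is_parallelogram (\<xi>1, \<xi>2, \<xi>3, \<xi>4) \<and> tauQ (\<xi>1, \<xi>2, \<xi>3, \<xi>4) = 0 \<and>
      distinct [\<xi>1, \<xi>2, \<xi>3, \<xi>4] \<and>
      (\<forall>\<xi>\<in>{\<xi>1, \<xi>2, \<xi>3, \<xi>4}. \<xi> \<in> (\<Union>j\<le>m. S j)) \<and>
      vertex_type C m S \<xi>4 \<xi>1 \<xi>2 \<alpha> \<and> vertex_type C m S \<xi>1 \<xi>2 \<xi>3 \<alpha> \<and>
      vertex_type C m S \<xi>2 \<xi>3 \<xi>4 \<beta> \<and> vertex_type C m S \<xi>3 \<xi>4 \<xi>1 \<beta>}"

end

theory Submission
  imports Defs
begin

text \<open>Write a parallelogram as \<open>(\<xi>, \<xi> + u, \<eta> + u, \<eta>)\<close>. Its weight is \<open>F\<^sub>u(\<xi>) F\<^sub>u(\<eta>)\<close> with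
  \<open>F\<^sub>u(\<xi>) = f(\<xi>) f(\<xi> + u)\<close>, and \<open>\<tau>\<^sub>Q = 2 |u \<cdot> (\<eta> - \<xi>)|\<close>, which is divisible by \<open>gcd u\<close>.
  For fixed \<open>u\<close> the sum over \<open>\<xi>, \<eta>\<close> is therefore a correlation of \<open>F\<^sub>u\<close> along the level
  sets of \<open>\<xi> \<mapsto> u \<cdot> \<xi>\<close>, and by Cauchy-Schwarz such a correlation is largest at shift 0,
  i.e. on pairs with \<open>u \<cdot> \<eta> = u \<cdot> \<xi>\<close>. For \<open>u = 0\<close> this is \<open>\<parallel>f\<parallel>\<^sup>4\<close>. For \<open>u \<noteq> 0\<close>, split \<open>F\<^sub>u\<close>
  into nine pieces according to the types of the crosses at \<open>\<xi>\<close> and \<open>\<xi> + u\<close> with axes \<open>u\<close>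
  and \<open>u\<^sup>\<bottom>\<close>; Cauchy-Schwarz again leaves only the correlation of each piece with itself.
  Its terms with \<open>\<eta> \<noteq> \<xi>\<close> are weights of rectangles \<open>(\<xi>, \<eta>, \<eta> + u, \<xi> + u)\<close> in
  \<open>\<Q>\<^sup>0\<^sub>\<alpha>\<^sub>,\<^sub>\<beta>\<close>, and its diagonal terms, summed over \<open>u\<close>, are at most \<open>\<parallel>f\<parallel>\<^sup>4\<close>.\<close>

definition level_mass :: "'a set \<Rightarrow> ('a \<Rightarrow> 'b) \<Rightarrow> ('a \<Rightarrow> real) \<Rightarrow> 'b \<Rightarrow> real" where
  "level_mass X \<phi> F k = sum F {\<xi> \<in> X. \<phi> \<xi> = k}"

definition corr :: "'a set \<Rightarrow> ('a \<Rightarrow> 'b::ab_group_add) \<Rightarrow> ('a \<Rightarrow> real) \<Rightarrow> 'b \<Rightarrow> real" where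
  "corr X \<phi> F c = (\<Sum>\<xi>\<in>X. \<Sum>\<eta>\<in>X. F \<xi> * F \<eta> * (if \<phi> \<eta> = \<phi> \<xi> + c then 1 else 0))"

definition offdiag_corr :: "'a set \<Rightarrow> ('a \<Rightarrow> 'b) \<Rightarrow> ('a \<Rightarrow> real) \<Rightarrow> real" where
  "offdiag_corr X \<phi> F = (\<Sum>\<xi>\<in>X. \<Sum>\<eta>\<in>X. F \<xi> * F \<eta> * (if \<phi> \<eta> = \<phi> \<xi> \<and> \<eta> \<noteq> \<xi> then 1 else 0))"

lemma corr_eq_sum_level_mass:
  assumes "finite X"
  shows "corr X \<phi> F c = (\<Sum>k\<in>\<phi> ` X. level_mass X \<phi> F k * level_mass X \<phi> F (k + c))"
proof -
  have "corr X \<phi> F c = (\<Sum>\<xi>\<in>X. F \<xi> * level_mass X \<phi> F (\<phi> \<xi> + c))"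
    unfolding corr_def level_mass_def using assms
    by (simp add: sum_distrib_left sum.inter_filter[symmetric] if_distrib mult.assoc cong: if_cong)
  also have "\<dots> = (\<Sum>k\<in>\<phi> ` X. \<Sum>\<xi>\<in>{\<xi> \<in> X. \<phi> \<xi> = k}. F \<xi> * level_mass X \<phi> F (\<phi> \<xi> + c))"
    by (rule sum.group[symmetric]) (use assms in auto)
  also have "\<dots> = (\<Sum>k\<in>\<phi> ` X. level_mass X \<phi> F k * level_mass X \<phi> F (k + c))"
    unfolding level_mass_def[of X \<phi> F] by (simp add: sum_distrib_right)
  finally show ?thesis .
qed

text \<open>Cauchy-Schwarz for the level masses: their autocorrelation is largest at shift 0.\<close>

lemma corr_le_corr_zero:
  assumes "finite X"
  shows "corr X \<phi> F c \<le> corr X \<phi> F 0"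
proof -
  let ?m = "level_mass X \<phi> F" and ?K = "\<phi> ` X"
  have vanish: "?m k = 0" if "k \<notin> ?K" for k
    using that unfolding level_mass_def by (intro sum.neutral) auto
  have shifted: "(\<Sum>k\<in>?K. (?m (k + c))\<^sup>2) \<le> (\<Sum>k\<in>?K. (?m k)\<^sup>2)"
  proof -
    have "(\<Sum>k\<in>?K. (?m (k + c))\<^sup>2) = (\<Sum>k\<in>(\<lambda>k. k + c) ` ?K. (?m k)\<^sup>2)"
      by (simp add: sum.reindex inj_on_def)
    also have "\<dots> = (\<Sum>k\<in>(\<lambda>k. k + c) ` ?K \<inter> ?K. (?m k)\<^sup>2)"
      by (rule sum.mono_neutral_right) (use assms vanish in auto)
    also have "\<dots> \<le> (\<Sum>k\<in>?K. (?m k)\<^sup>2)"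
      by (rule sum_mono2) (use assms in auto)
    finally show ?thesis .
  qed
  have "corr X \<phi> F c = (\<Sum>k\<in>?K. ?m k * ?m (k + c))"
    by (rule corr_eq_sum_level_mass[OF assms])
  also have "\<dots> \<le> (\<Sum>k\<in>?K. ((?m k)\<^sup>2 + (?m (k + c))\<^sup>2) / 2)"
    using sum_squares_bound[of "?m k" "?m (k + c)" for k] by (intro sum_mono) (simp add: mult_ac)
  also have "\<dots> \<le> (\<Sum>k\<in>?K. (?m k)\<^sup>2)"
    using shifted by (simp add: sum.distrib flip: sum_divide_distrib)
  also have "\<dots> = corr X \<phi> F 0"
    by (simp add: corr_eq_sum_level_mass[OF assms] power2_eq_square)
  finally show ?thesis .
qed

lemma corr_sum_le:
  assumes "finite X"
  shows "corr X \<phi> (\<lambda>\<xi>. \<Sum>i\<in>I. F i \<xi>) 0 \<le> card I * (\<Sum>i\<in>I. corr X \<phi> (F i) 0)"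
proof -
  have level_sum: "level_mass X \<phi> (\<lambda>\<xi>. \<Sum>i\<in>I. F i \<xi>) k = (\<Sum>i\<in>I. level_mass X \<phi> (F i) k)" for k
    unfolding level_mass_def by (rule sum.swap)
  have "corr X \<phi> (\<lambda>\<xi>. \<Sum>i\<in>I. F i \<xi>) 0 = (\<Sum>k\<in>\<phi> ` X. (\<Sum>i\<in>I. level_mass X \<phi> (F i) k)\<^sup>2)"
    by (simp add: corr_eq_sum_level_mass[OF assms] level_sum power2_eq_square)
  also have "\<dots> \<le> (\<Sum>k\<in>\<phi> ` X. card I * (\<Sum>i\<in>I. (level_mass X \<phi> (F i) k)\<^sup>2))"
    by (intro sum_mono) (metis sum_squared_le_sum_of_squares mult.commute)
  also have "\<dots> = card I * (\<Sum>i\<in>I. corr X \<phi> (F i) 0)"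
    by (simp add: corr_eq_sum_level_mass[OF assms] power2_eq_square sum_distrib_left
        sum.swap[of _ "\<phi> ` X"])
  finally show ?thesis .
qed

lemma corr_zero_eq_offdiag_corr_plus_diagonal:
  assumes "finite X"
  shows "corr X \<phi> F 0 = offdiag_corr X \<phi> F + (\<Sum>\<xi>\<in>X. (F \<xi>)\<^sup>2)"
proof -
  have split: "F \<xi> * F \<eta> * (if \<phi> \<eta> = \<phi> \<xi> then 1 else 0) =
      F \<xi> * F \<eta> * (if \<phi> \<eta> = \<phi> \<xi> \<and> \<eta> \<noteq> \<xi> then 1 else 0) + (if \<eta> = \<xi> then (F \<xi>)\<^sup>2 else 0)"
    for \<xi> \<eta>
    by (cases "\<eta> = \<xi>") (simp_all add: power2_eq_square)
  have "corr X \<phi> F 0 = (\<Sum>\<xi>\<in>X. \<Sum>\<eta>\<in>X. F \<xi> * F \<eta> * (if \<phi> \<eta> = \<phi> \<xi> \<and> \<eta> \<noteq> \<xi> then 1 else 0)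
      + (if \<eta> = \<xi> then (F \<xi>)\<^sup>2 else 0))"
    unfolding corr_def by (simp only: add_0_right split)
  also have "\<dots> = offdiag_corr X \<phi> F + (\<Sum>\<xi>\<in>X. (F \<xi>)\<^sup>2)"
    unfolding offdiag_corr_def using assms by (simp add: sum.distrib)
  finally show ?thesis .
qed

lemma sum_abs_diff_eq_le_corr:
  fixes \<phi> :: "'a \<Rightarrow> 'b::linordered_idom"
  assumes "finite X" "\<And>\<xi>. F \<xi> \<ge> 0"
  shows "(\<Sum>\<xi>\<in>X. \<Sum>\<eta>\<in>X. F \<xi> * F \<eta> * (if \<bar>\<phi> \<eta> - \<phi> \<xi>\<bar> = t then 1 else 0)) \<le> 2 * corr X \<phi> F 0"
proof -
  have "(\<Sum>\<xi>\<in>X. \<Sum>\<eta>\<in>X. F \<xi> * F \<eta> * (if \<bar>\<phi> \<eta> - \<phi> \<xi>\<bar> = t then 1 else 0))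
      \<le> (\<Sum>\<xi>\<in>X. \<Sum>\<eta>\<in>X. F \<xi> * F \<eta> * (if \<phi> \<eta> = \<phi> \<xi> + t then 1 else 0)
                          + F \<xi> * F \<eta> * (if \<phi> \<eta> = \<phi> \<xi> + - t then 1 else 0))"
  proof (intro sum_mono)
    fix \<xi> \<eta>
    have "F \<xi> * F \<eta> \<ge> 0" using assms(2) by simp
    then show "F \<xi> * F \<eta> * (if \<bar>\<phi> \<eta> - \<phi> \<xi>\<bar> = t then 1 else 0)
        \<le> F \<xi> * F \<eta> * (if \<phi> \<eta> = \<phi> \<xi> + t then 1 else 0)
          + F \<xi> * F \<eta> * (if \<phi> \<eta> = \<phi> \<xi> + - t then 1 else 0)"
      by (auto simp: abs_if algebra_simps)
  qed
  also have "\<dots> = corr X \<phi> F t + corr X \<phi> F (- t)"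
    unfolding corr_def by (simp add: sum.distrib)
  also have "\<dots> \<le> 2 * corr X \<phi> F 0"
    using corr_le_corr_zero[OF assms(1), of \<phi> F t] corr_le_corr_zero[OF assms(1), of \<phi> F "- t"]
    by linarith
  finally show ?thesis .
qed

definition line_at :: "pt2 \<Rightarrow> real \<times> real \<Rightarrow> (real \<times> real) set" where
  "line_at p d = {rpt p + t *\<^sub>R d | t. True}"

definition perp :: "pt2 \<Rightarrow> pt2" where
  "perp u = (- snd u, fst u)"

definition cross_type_at ::
    "real \<Rightarrow> nat \<Rightarrow> (nat \<Rightarrow> pt2 set) \<Rightarrow> pt2 \<Rightarrow> (real \<times> real) set \<Rightarrow> (real \<times> real) set \<Rightarrow> nat \<Rightarrow> bool" where
  "cross_type_at C m S p l1 l2 \<alpha> \<longleftrightarrow> (\<exists>j\<le>m. p \<in> S j \<and> cross_type C j (S j) l1 l2 \<alpha>)"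

text \<open>The choice resolves the overlap of types 1 and 3 when \<open>j / 2 + C = 0\<close>; the value 1 for
  points outside \<open>\<Union>j\<le>m. S j\<close> is junk.\<close>

definition axis_type :: "real \<Rightarrow> nat \<Rightarrow> (nat \<Rightarrow> pt2 set) \<Rightarrow> pt2 \<Rightarrow> pt2 \<Rightarrow> nat" where
  "axis_type C m S u p =
    (if \<exists>\<alpha>\<in>{1,2,3}. cross_type_at C m S p (line_at p (rpt u)) (line_at p (rpt (perp u))) \<alpha>
     then SOME \<alpha>. \<alpha> \<in> {1,2,3} \<and> cross_type_at C m S p (line_at p (rpt u)) (line_at p (rpt (perp u))) \<alpha>
     else 1)"

lemma vertex_type_eq_cross_type_at:
  "vertex_type C m S x p y \<alpha> = cross_type_at C m S p (line_through p x) (line_through p y) \<alpha>"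
  unfolding vertex_type_def cross_type_at_def ..

lemma rpt_diff: "rpt (a - b) = rpt a - rpt b"
  by (simp add: rpt_def)

lemma line_through_eq_line_at: "line_through p q = line_at p (rpt (q - p))"
  unfolding line_through_def line_at_def by (simp add: rpt_diff)

lemma rpt_mem_line_at: "rpt p \<in> line_at p d"
  unfolding line_at_def by (rule CollectI, rule exI[of _ 0]) simp

lemma line_at_scaleR:
  assumes "k \<noteq> 0"
  shows "line_at p (k *\<^sub>R d) = line_at p d"
proof
  show "line_at p (k *\<^sub>R d) \<subseteq> line_at p d"
    unfolding line_at_def by (auto simp: scaleR_scaleR)
  show "line_at p d \<subseteq> line_at p (k *\<^sub>R d)"
  proof
    fix x assume "x \<in> line_at p d"
    then obtain t where "x = rpt p + t *\<^sub>R d" unfolding line_at_def by blast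
    hence "x = rpt p + (t / k) *\<^sub>R (k *\<^sub>R d)" using assms by (simp add: scaleR_scaleR)
    thus "x \<in> line_at p (k *\<^sub>R d)" unfolding line_at_def by blast
  qed
qed

lemma line_at_uminus: "line_at p (rpt (- u)) = line_at p (rpt u)"
proof -
  have "rpt (- u) = (-1) *\<^sub>R rpt u" by (simp add: rpt_def)
  thus ?thesis using line_at_scaleR[of "-1" p "rpt u"] by simp
qed

lemma line_at_orthogonal:
  assumes "u \<noteq> 0" "h \<noteq> 0" "dot2 u h = 0"
  shows "line_at p (rpt h) = line_at p (rpt (perp u))"
proof -
  obtain a b x y where ab: "rpt u = (a, b)" "rpt (perp u) = (- b, a)" and xy: "rpt h = (x, y)"
    by (simp add: rpt_def perp_def)
  have "a * x + b * y = real_of_int (dot2 u h)"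
    using ab xy by (auto simp: rpt_def dot2_def)
  hence orth: "a * x + b * y = 0" using assms(3) by simp
  have norm: "a\<^sup>2 + b\<^sup>2 \<noteq> 0"
    using assms(1) ab by (auto simp: rpt_def prod_eq_iff sum_power2_eq_zero_iff)
  define c where "c = (a * y - b * x) / (a\<^sup>2 + b\<^sup>2)"
  have "x * (a\<^sup>2 + b\<^sup>2) + (a * y - b * x) * b = a * (a * x + b * y)"
       "y * (a\<^sup>2 + b\<^sup>2) - (a * y - b * x) * a = b * (a * x + b * y)"
    by (simp_all add: power2_eq_square algebra_simps)
  hence "x = c * - b" "y = c * a"
    using orth norm unfolding c_def by (simp_all add: field_simps)
  hence scaled: "rpt h = c *\<^sub>R rpt (perp u)"
    using ab xy by simp
  have "c \<noteq> 0" using assms(2) scaled by (auto simp: rpt_def prod_eq_iff)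
  thus ?thesis by (simp add: scaled line_at_scaleR)
qed

lemma cross_type_at_commute: "cross_type_at C m S p l1 l2 = cross_type_at C m S p l2 l1"
  unfolding cross_type_at_def cross_type_def cross_a_def by (simp add: max.commute)

lemma cross_type_at_exists:
  assumes "j \<le> m" "p \<in> S j" "finite (S j)" "rpt p \<in> l1"
  shows "\<exists>\<alpha>\<in>{1,2,3}. cross_type_at C m S p l1 l2 \<alpha>"
proof -
  let ?M = "max (lat_count l1 (S j)) (lat_count l2 (S j))"
  define a where "a = cross_a (S j) l1 l2"
  have "p \<in> {\<xi> \<in> S j. rpt \<xi> \<in> l1}" using assms(2,4) by simp
  moreover have "finite {\<xi> \<in> S j. rpt \<xi> \<in> l1}" using assms(3) by simp
  ultimately have "card {\<xi> \<in> S j. rpt \<xi> \<in> l1} > 0" using card_gt_0_iff by blast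
  hence "lat_count l1 (S j) \<ge> 1" unfolding lat_count_def by simp
  hence M1: "?M \<ge> 1" by simp
  have a: "a = log 2 (real ?M)" unfolding a_def cross_a_def by simp
  have "cross_type C j (S j) l1 l2 \<alpha>" if
    "\<alpha> = 1 \<and> a \<ge> real j / 2 + C \<or> \<alpha> = 2 \<and> 1 \<le> a \<and> a < real j / 2 + C \<or> \<alpha> = 3 \<and> a = 0" for \<alpha>
    using that unfolding cross_type_def Let_def a_def by blast
  moreover have "a \<ge> 1 \<or> a = 0"
  proof (cases "?M \<ge> 2")
    case True
    then show ?thesis unfolding a by simp
  next
    case False
    then have "?M = 1" using M1 by linarith
    then show ?thesis unfolding a by simp
  qed
  ultimately have "\<exists>\<alpha>\<in>{1,2,3}. cross_type C j (S j) l1 l2 \<alpha>"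
    by (cases "a \<ge> real j / 2 + C") auto
  thus ?thesis unfolding cross_type_at_def using assms(1,2) by blast
qed

lemma axis_type_range: "axis_type C m S u p \<in> {1,2,3}"
proof (cases "\<exists>\<alpha>\<in>{1,2,3}. cross_type_at C m S p (line_at p (rpt u)) (line_at p (rpt (perp u))) \<alpha>")
  case True
  hence "\<exists>\<alpha>. \<alpha> \<in> {1,2,3} \<and> cross_type_at C m S p (line_at p (rpt u)) (line_at p (rpt (perp u))) \<alpha>"
    by blast
  from someI_ex[OF this] True show ?thesis unfolding axis_type_def by simp
qed (simp add: axis_type_def)

lemma cross_type_at_axis_type:
  assumes "\<forall>j\<le>m. finite (S j)" "p \<in> (\<Union>j\<le>m. S j)"
  shows "cross_type_at C m S p (line_at p (rpt u)) (line_at p (rpt (perp u))) (axis_type C m S u p)"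
proof -
  obtain j where "j \<le> m" "p \<in> S j" using assms(2) by blast
  hence ex: "\<exists>\<alpha>\<in>{1,2,3}. cross_type_at C m S p (line_at p (rpt u)) (line_at p (rpt (perp u))) \<alpha>"
    using assms(1) by (intro cross_type_at_exists) (auto simp: rpt_mem_line_at)
  hence "\<exists>\<alpha>. \<alpha> \<in> {1,2,3} \<and> cross_type_at C m S p (line_at p (rpt u)) (line_at p (rpt (perp u))) \<alpha>"
    by blast
  from someI_ex[OF this] ex show ?thesis unfolding axis_type_def by simp
qed

lemma vertex_type_axis_type:
  assumes "\<forall>j\<le>m. finite (S j)" "p \<in> (\<Union>j\<le>m. S j)" "u \<noteq> 0"
    and "x - p = u \<or> x - p = - u" and "y \<noteq> p" "dot2 u (y - p) = 0"
  shows "vertex_type C m S x p y (axis_type C m S u p)"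
    and "vertex_type C m S y p x (axis_type C m S u p)"
proof -
  have "line_through p x = line_at p (rpt u)"
    using assms(4) by (auto simp: line_through_eq_line_at line_at_uminus)
  moreover have "line_through p y = line_at p (rpt (perp u))"
    using assms(3,5,6) by (simp add: line_through_eq_line_at line_at_orthogonal)
  moreover note cross_type_at_axis_type[OF assms(1,2), of C u]
  ultimately show "vertex_type C m S x p y (axis_type C m S u p)"
    and "vertex_type C m S y p x (axis_type C m S u p)"
    unfolding vertex_type_eq_cross_type_at by (simp_all add: cross_type_at_commute[of C m S p])
qed

definition pair_weight :: "(pt2 \<Rightarrow> real) \<Rightarrow> pt2 \<Rightarrow> pt2 \<Rightarrow> real" where
  "pair_weight f u \<xi> = f \<xi> * f (\<xi> + u)"

definition typed_pair_weight ::
    "real \<Rightarrow> nat \<Rightarrow> (nat \<Rightarrow> pt2 set) \<Rightarrow> (pt2 \<Rightarrow> real) \<Rightarrow> pt2 \<Rightarrow> nat \<times> nat \<Rightarrow> pt2 \<Rightarrow> real" where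
  "typed_pair_weight C m S f u ab \<xi> =
     (if (axis_type C m S u \<xi>, axis_type C m S u (\<xi> + u)) = ab then pair_weight f u \<xi> else 0)"

definition rect_sum :: "real \<Rightarrow> nat \<Rightarrow> (nat \<Rightarrow> pt2 set) \<Rightarrow> (pt2 \<Rightarrow> real) \<Rightarrow> int \<Rightarrow> nat \<Rightarrow> nat \<Rightarrow> real" where
  "rect_sum C m S f \<tau> \<alpha> \<beta> =
     (\<Sum>Q\<in>{Q \<in> Q0_ab C m S \<alpha> \<beta>. gcd2 (fst Q - snd (snd (snd Q))) dvd \<tau>}. fQ f Q)"

lemma dot2_diff: "dot2 u (a - b) = dot2 u a - dot2 u b"
  by (simp add: dot2_def algebra_simps)

lemma dot2_add: "dot2 u (a + b) = dot2 u a + dot2 u b"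
  by (simp add: dot2_def algebra_simps)

lemma dot2_self_pos: "u \<noteq> 0 \<Longrightarrow> dot2 u u > 0"
  by (cases u) (auto simp: dot2_def zero_prod_def sum_power2_gt_zero_iff simp flip: power2_eq_square)

lemma gcd2_dvd_dot2: "gcd2 u dvd dot2 u v"
  unfolding gcd2_def dot2_def by (intro dvd_add dvd_mult2) auto

lemma pair_weight_nonneg: "(\<And>x. f x \<ge> 0) \<Longrightarrow> pair_weight f u \<xi> \<ge> 0"
  by (simp add: pair_weight_def)

lemma fQ_nonneg: "(\<And>x. f x \<ge> 0) \<Longrightarrow> fQ f Q \<ge> 0"
  by (cases Q) (auto simp: fQ_def)

lemma pair_weight_eq_sum_typed:
  "pair_weight f u \<xi> = (\<Sum>ab\<in>{1,2,3} \<times> {1,2,3}. typed_pair_weight C m S f u ab \<xi>)"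
proof -
  have fin: "finite ({1,2,3} \<times> {1,2,3} :: (nat \<times> nat) set)" by simp
  have "(axis_type C m S u \<xi>, axis_type C m S u (\<xi> + u)) \<in> {1,2,3} \<times> {1,2,3}"
    using axis_type_range by blast
  then show ?thesis
    unfolding typed_pair_weight_def sum.delta'[OF fin] by (simp only: if_True)
qed

lemma parallelogram_sum_le:
  assumes "finite U" "\<And>x. f x \<ge> 0"
  shows "(\<Sum>Q\<in>{Q \<in> quads_in U. is_parallelogram Q \<and> tauQ Q = \<tau>}. fQ f Q)
       \<le> (\<Sum>u\<in>(\<lambda>(a, b). b - a) ` (U \<times> U). \<Sum>\<xi>\<in>U. \<Sum>\<eta>\<in>U.
            pair_weight f u \<xi> * pair_weight f u \<eta> * (if 2 * \<bar>dot2 u (\<eta> - \<xi>)\<bar> = \<tau> then 1 else 0))"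
    (is "_ \<le> ?rhs")
proof -
  let ?D = "(\<lambda>(a, b). b - a) ` (U \<times> U)"
  let ?G = "\<lambda>(u, \<xi>, \<eta>). pair_weight f u \<xi> * pair_weight f u \<eta> * (if 2 * \<bar>dot2 u (\<eta> - \<xi>)\<bar> = \<tau> then 1 else 0)"
  have "(\<Sum>Q\<in>{Q \<in> quads_in U. is_parallelogram Q \<and> tauQ Q = \<tau>}. fQ f Q) \<le> (\<Sum>x\<in>?D \<times> U \<times> U. ?G x)"
  proof (rule sum_le_included[where i = "\<lambda>(u, \<xi>, \<eta>). (\<xi>, \<xi> + u, \<eta> + u, \<eta>)"])
    show "finite {Q \<in> quads_in U. is_parallelogram Q \<and> tauQ Q = \<tau>}" "finite (?D \<times> U \<times> U)"
      using assms(1) by (simp_all add: quads_in_def)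
    show "\<forall>x\<in>?D \<times> U \<times> U. 0 \<le> ?G x"
      using assms(2) by (auto simp: pair_weight_def)
    show "\<forall>Q\<in>{Q \<in> quads_in U. is_parallelogram Q \<and> tauQ Q = \<tau>}.
            \<exists>x\<in>?D \<times> U \<times> U. (case x of (u, \<xi>, \<eta>) \<Rightarrow> (\<xi>, \<xi> + u, \<eta> + u, \<eta>)) = Q \<and> fQ f Q \<le> ?G x"
    proof
      fix Q assume Q: "Q \<in> {Q \<in> quads_in U. is_parallelogram Q \<and> tauQ Q = \<tau>}"
      obtain a b c d where Qe: "Q = (a, b, c, d)" by (cases Q) auto
      have "a \<in> U" "b \<in> U" "d \<in> U" using Q Qe by (auto simp: quads_in_def)
      hence "(b - a, a, d) \<in> ?D \<times> U \<times> U" by force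
      moreover have "c = d + (b - a)" using Q Qe by (simp add: is_parallelogram_def algebra_simps)
      moreover have "dot2 (b - a) (d - a) = dot2 (a - b) (a - d)" by (simp add: dot2_def algebra_simps)
      ultimately show "\<exists>x\<in>?D \<times> U \<times> U. (case x of (u, \<xi>, \<eta>) \<Rightarrow> (\<xi>, \<xi> + u, \<eta> + u, \<eta>)) = Q \<and> fQ f Q \<le> ?G x"
        using Q Qe by (intro bexI[of _ "(b - a, a, d)"]) (auto simp: tauQ_def fQ_def pair_weight_def mult_ac)
    qed
  qed
  also have "\<dots> = ?rhs"
    by (simp add: sum.cartesian_product)
  finally show ?thesis .
qed

lemma sum_tau_le_corr:
  assumes "finite X" "\<And>\<xi>. F \<xi> \<ge> 0"
  shows "(\<Sum>\<xi>\<in>X. \<Sum>\<eta>\<in>X. F \<xi> * F \<eta> * (if 2 * \<bar>dot2 u (\<eta> - \<xi>)\<bar> = \<tau> then 1 else 0))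
       \<le> (if gcd2 u dvd \<tau> then 2 * corr X (dot2 u) F 0 else 0)"
proof (cases "gcd2 u dvd \<tau>")
  case False
  have "gcd2 u dvd 2 * \<bar>dot2 u (\<eta> - \<xi>)\<bar>" for \<xi> \<eta>
    by (simp add: gcd2_dvd_dot2)
  with False have "2 * \<bar>dot2 u (\<eta> - \<xi>)\<bar> \<noteq> \<tau>" for \<xi> \<eta>
    by metis
  with False show ?thesis by simp
next
  case True
  have "\<bar>2 * dot2 u \<eta> - 2 * dot2 u \<xi>\<bar> = 2 * \<bar>dot2 u (\<eta> - \<xi>)\<bar>" for \<xi> \<eta>
  proof -
    have "2 * dot2 u \<eta> - 2 * dot2 u \<xi> = 2 * dot2 u (\<eta> - \<xi>)" by (simp add: dot2_diff)
    thus ?thesis by (simp add: abs_mult)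
  qed
  hence "(\<Sum>\<xi>\<in>X. \<Sum>\<eta>\<in>X. F \<xi> * F \<eta> * (if 2 * \<bar>dot2 u (\<eta> - \<xi>)\<bar> = \<tau> then 1 else 0))
      \<le> 2 * corr X (\<lambda>x. 2 * dot2 u x) F 0"
    using sum_abs_diff_eq_le_corr[OF assms, where \<phi> = "\<lambda>x. 2 * dot2 u x" and t = \<tau>] by (simp only:)
  also have "corr X (\<lambda>x. 2 * dot2 u x) F 0 = corr X (dot2 u) F 0"
    unfolding corr_def by simp
  finally show ?thesis using True by simp
qed

lemma corr_pair_weight_zero: "corr U (dot2 0) (pair_weight f 0) 0 = (\<Sum>\<xi>\<in>U. (f \<xi>)\<^sup>2)\<^sup>2"
  unfolding corr_def pair_weight_def by (simp add: dot2_def power2_eq_square sum_product mult_ac)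

lemma corr_pair_weight_le:
  assumes "finite U" "\<And>x. f x \<ge> 0"
  shows "corr U (dot2 u) (pair_weight f u) 0
       \<le> 9 * (\<Sum>ab\<in>{1,2,3} \<times> {1,2,3}. offdiag_corr U (dot2 u) (typed_pair_weight C m S f u ab)
                                        + (\<Sum>\<xi>\<in>U. (pair_weight f u \<xi>)\<^sup>2))"
proof -
  let ?I = "{1,2,3} \<times> {1,2,3} :: (nat \<times> nat) set"
  have split: "pair_weight f u = (\<lambda>\<xi>. \<Sum>ab\<in>?I. typed_pair_weight C m S f u ab \<xi>)"
    using pair_weight_eq_sum_typed by blast
  have card: "real (card ?I) = 9" by simp
  have "(typed_pair_weight C m S f u ab \<xi>)\<^sup>2 \<le> (pair_weight f u \<xi>)\<^sup>2" for ab \<xi>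
    by (simp add: typed_pair_weight_def)
  hence typed_le: "corr U (dot2 u) (typed_pair_weight C m S f u ab) 0
      \<le> offdiag_corr U (dot2 u) (typed_pair_weight C m S f u ab) + (\<Sum>\<xi>\<in>U. (pair_weight f u \<xi>)\<^sup>2)" for ab
    unfolding corr_zero_eq_offdiag_corr_plus_diagonal[OF assms(1)] by (intro add_left_mono sum_mono)
  have "corr U (dot2 u) (pair_weight f u) 0
      \<le> card ?I * (\<Sum>ab\<in>?I. corr U (dot2 u) (typed_pair_weight C m S f u ab) 0)"
    unfolding split by (rule corr_sum_le[OF assms(1)])
  also have "\<dots> \<le> 9 * (\<Sum>ab\<in>?I. offdiag_corr U (dot2 u) (typed_pair_weight C m S f u ab)
                                   + (\<Sum>\<xi>\<in>U. (pair_weight f u \<xi>)\<^sup>2))"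
    unfolding card by (intro mult_left_mono sum_mono typed_le) simp
  finally show ?thesis .
qed

lemma sum_pair_weight_sq_le:
  assumes "finite U" "finite D" "\<And>x. f x \<noteq> 0 \<Longrightarrow> x \<in> U"
  shows "(\<Sum>u\<in>D. \<Sum>\<xi>\<in>U. (pair_weight f u \<xi>)\<^sup>2) \<le> (\<Sum>\<xi>\<in>U. (f \<xi>)\<^sup>2)\<^sup>2"
proof -
  let ?G = "\<lambda>(u, \<xi>). (pair_weight f u \<xi>)\<^sup>2"
  have "(\<Sum>u\<in>D. \<Sum>\<xi>\<in>U. (pair_weight f u \<xi>)\<^sup>2) = (\<Sum>x\<in>{x \<in> D \<times> U. ?G x \<noteq> 0}. ?G x)"
    using assms(1,2) by (simp add: sum.cartesian_product sum.mono_neutral_right)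
  also have "\<dots> \<le> (\<Sum>(\<xi>, \<eta>)\<in>U \<times> U. (f \<xi>)\<^sup>2 * (f \<eta>)\<^sup>2)"
  proof (rule sum_le_included[where i = "\<lambda>(\<xi>, \<eta>). (\<eta> - \<xi>, \<xi>)"])
    show "finite {x \<in> D \<times> U. ?G x \<noteq> 0}" "finite (U \<times> U)"
      using assms(1,2) by simp_all
    show "\<forall>y\<in>U \<times> U. 0 \<le> (case y of (\<xi>, \<eta>) \<Rightarrow> (f \<xi>)\<^sup>2 * (f \<eta>)\<^sup>2)"
      by auto
    show "\<forall>x\<in>{x \<in> D \<times> U. ?G x \<noteq> 0}. \<exists>y\<in>U \<times> U.
            (case y of (\<xi>, \<eta>) \<Rightarrow> (\<eta> - \<xi>, \<xi>)) = x \<and> ?G x \<le> (case y of (\<xi>, \<eta>) \<Rightarrow> (f \<xi>)\<^sup>2 * (f \<eta>)\<^sup>2)"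
    proof
      fix x assume x: "x \<in> {x \<in> D \<times> U. ?G x \<noteq> 0}"
      then obtain u \<xi> where xe: "x = (u, \<xi>)" "\<xi> \<in> U" "f (\<xi> + u) \<noteq> 0"
        by (auto simp: pair_weight_def)
      then show "\<exists>y\<in>U \<times> U. (case y of (\<xi>, \<eta>) \<Rightarrow> (\<eta> - \<xi>, \<xi>)) = x
                   \<and> ?G x \<le> (case y of (\<xi>, \<eta>) \<Rightarrow> (f \<xi>)\<^sup>2 * (f \<eta>)\<^sup>2)"
        using assms(3) by (intro bexI[of _ "(\<xi>, \<xi> + u)"]) (auto simp: pair_weight_def power_mult_distrib)
    qed
  qed
  also have "\<dots> = (\<Sum>\<xi>\<in>U. (f \<xi>)\<^sup>2)\<^sup>2"
    by (simp add: power2_eq_square[of "sum _ _"] sum_product sum.cartesian_product)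
  finally show ?thesis .
qed

lemma rectangle_mem_Q0_ab:
  assumes fin: "\<forall>j\<le>m. finite (S j)"
    and in_U: "\<xi> \<in> (\<Union>j\<le>m. S j)" "\<eta> \<in> (\<Union>j\<le>m. S j)"
      "\<xi> + u \<in> (\<Union>j\<le>m. S j)" "\<eta> + u \<in> (\<Union>j\<le>m. S j)"
    and u: "u \<noteq> 0" and "\<eta> \<noteq> \<xi>" and level: "dot2 u \<eta> = dot2 u \<xi>"
    and types: "axis_type C m S u \<xi> = \<alpha>" "axis_type C m S u \<eta> = \<alpha>"
      "axis_type C m S u (\<xi> + u) = \<beta>" "axis_type C m S u (\<eta> + u) = \<beta>"
  shows "(\<xi>, \<eta>, \<eta> + u, \<xi> + u) \<in> Q0_ab C m S \<alpha> \<beta>"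
proof -
  have "\<xi> \<noteq> \<eta> + u" "\<eta> \<noteq> \<xi> + u"
    using level dot2_self_pos[OF u] by (auto simp: dot2_add)
  hence "distinct [\<xi>, \<eta>, \<eta> + u, \<xi> + u]"
    using \<open>\<eta> \<noteq> \<xi>\<close> u by auto
  moreover have orth: "dot2 u (\<eta> - \<xi>) = 0" "dot2 u (\<xi> - \<eta>) = 0"
    "dot2 u ((\<eta> + u) - (\<xi> + u)) = 0" "dot2 u ((\<xi> + u) - (\<eta> + u)) = 0"
    using level by (simp_all add: dot2_diff)
  have "vertex_type C m S (\<xi> + u) \<xi> \<eta> \<alpha>"
    using vertex_type_axis_type(1)[where C = C and x = "\<xi> + u", OF fin in_U(1) u _ _ orth(1)] types \<open>\<eta> \<noteq> \<xi>\<close> by simp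
  moreover have "vertex_type C m S \<xi> \<eta> (\<eta> + u) \<alpha>"
    using vertex_type_axis_type(2)[where C = C and x = "\<eta> + u", OF fin in_U(2) u _ _ orth(2)] types \<open>\<eta> \<noteq> \<xi>\<close> by simp
  moreover have "vertex_type C m S \<eta> (\<eta> + u) (\<xi> + u) \<beta>"
    using vertex_type_axis_type(1)[where C = C and x = \<eta>, OF fin in_U(4) u _ _ orth(4)] types \<open>\<eta> \<noteq> \<xi>\<close> by simp
  moreover have "vertex_type C m S (\<eta> + u) (\<xi> + u) \<xi> \<beta>"
    using vertex_type_axis_type(2)[where C = C and x = \<xi>, OF fin in_U(3) u _ _ orth(3)] types \<open>\<eta> \<noteq> \<xi>\<close> by simp
  moreover have "tauQ (\<xi>, \<eta>, \<eta> + u, \<xi> + u) = 0"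
    using level by (simp add: tauQ_def dot2_def algebra_simps)
  moreover have "is_parallelogram (\<xi>, \<eta>, \<eta> + u, \<xi> + u)"
    by (simp add: is_parallelogram_def algebra_simps)
  ultimately show ?thesis
    using in_U unfolding Q0_ab_def by blast
qed

lemma sum_offdiag_corr_le_rect_sum:
  assumes fin: "\<forall>j\<le>m. finite (S j)" and f0: "\<And>x. f x \<ge> 0"
    and supp: "\<And>x. f x \<noteq> 0 \<Longrightarrow> x \<in> (\<Union>j\<le>m. S j)"
    and V: "finite V" "\<And>u. u \<in> V \<Longrightarrow> u \<noteq> 0 \<and> gcd2 u dvd \<tau>"
  shows "(\<Sum>u\<in>V. offdiag_corr (\<Union>j\<le>m. S j) (dot2 u) (typed_pair_weight C m S f u (\<alpha>, \<beta>)))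
       \<le> rect_sum C m S f \<tau> \<alpha> \<beta>"
proof -
  let ?U = "\<Union>j\<le>m. S j"
  let ?R = "{Q \<in> Q0_ab C m S \<alpha> \<beta>. gcd2 (fst Q - snd (snd (snd Q))) dvd \<tau>}"
  define G where "G = (\<lambda>(u, \<xi>, \<eta>). typed_pair_weight C m S f u (\<alpha>, \<beta>) \<xi> * typed_pair_weight C m S f u (\<alpha>, \<beta>) \<eta>
                              * (if dot2 u \<eta> = dot2 u \<xi> \<and> \<eta> \<noteq> \<xi> then 1 else (0::real)))"
  have finU: "finite ?U" using fin by simp
  have "(\<Sum>u\<in>V. offdiag_corr ?U (dot2 u) (typed_pair_weight C m S f u (\<alpha>, \<beta>)))
      = (\<Sum>x\<in>{x \<in> V \<times> ?U \<times> ?U. G x \<noteq> 0}. G x)"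
    unfolding offdiag_corr_def G_def using V(1) finU
    by (simp add: sum.cartesian_product sum.mono_neutral_right)
  also have "\<dots> \<le> (\<Sum>Q\<in>?R. fQ f Q)"
  proof (rule sum_le_included[where i = "\<lambda>(\<xi>1, \<xi>2, \<xi>3, \<xi>4). (\<xi>4 - \<xi>1, \<xi>1, \<xi>2)"])
    show "finite {x \<in> V \<times> ?U \<times> ?U. G x \<noteq> 0}" using V(1) finU by simp
    have "?R \<subseteq> quads_in ?U" unfolding Q0_ab_def quads_in_def by auto
    then show "finite ?R" by (rule finite_subset) (simp add: quads_in_def finU)
    show "\<forall>Q\<in>?R. 0 \<le> fQ f Q" using f0 fQ_nonneg by blast
    show "\<forall>x\<in>{x \<in> V \<times> ?U \<times> ?U. G x \<noteq> 0}. \<exists>Q\<in>?R.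
            (case Q of (\<xi>1, \<xi>2, \<xi>3, \<xi>4) \<Rightarrow> (\<xi>4 - \<xi>1, \<xi>1, \<xi>2)) = x \<and> G x \<le> fQ f Q"
    proof
      fix x assume x: "x \<in> {x \<in> V \<times> ?U \<times> ?U. G x \<noteq> 0}"
      then obtain u \<xi> \<eta> where xe: "x = (u, \<xi>, \<eta>)" "u \<in> V" and "G (u, \<xi>, \<eta>) \<noteq> 0" by auto
      then have "dot2 u \<eta> = dot2 u \<xi>" "\<eta> \<noteq> \<xi>"
        and types: "axis_type C m S u \<xi> = \<alpha>" "axis_type C m S u \<eta> = \<alpha>"
          "axis_type C m S u (\<xi> + u) = \<beta>" "axis_type C m S u (\<eta> + u) = \<beta>"
        and nz: "f \<xi> \<noteq> 0" "f \<eta> \<noteq> 0" "f (\<xi> + u) \<noteq> 0" "f (\<eta> + u) \<noteq> 0"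
        unfolding G_def typed_pair_weight_def pair_weight_def by (auto split: if_splits)
      moreover have "u \<noteq> 0" "gcd2 u dvd \<tau>" using V(2) xe(2) by auto
      ultimately have "(\<xi>, \<eta>, \<eta> + u, \<xi> + u) \<in> ?R"
        using rectangle_mem_Q0_ab[OF fin supp supp supp supp] by (simp add: gcd2_def)
      moreover have "G x \<le> fQ f (\<xi>, \<eta>, \<eta> + u, \<xi> + u)"
        using xe types \<open>dot2 u \<eta> = dot2 u \<xi>\<close> \<open>\<eta> \<noteq> \<xi>\<close>
        by (simp add: G_def typed_pair_weight_def pair_weight_def fQ_def mult_ac)
      ultimately show "\<exists>Q\<in>?R. (case Q of (\<xi>1, \<xi>2, \<xi>3, \<xi>4) \<Rightarrow> (\<xi>4 - \<xi>1, \<xi>1, \<xi>2)) = x \<and> G x \<le> fQ f Q"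
        using xe(1) by (intro bexI[of _ "(\<xi>, \<eta>, \<eta> + u, \<xi> + u)"]) auto
    qed
  qed
  finally show ?thesis unfolding rect_sum_def .
qed

lemma pair_sum_le:
  assumes "finite U" "\<And>x. f x \<ge> 0"
  shows "(\<Sum>\<xi>\<in>U. \<Sum>\<eta>\<in>U. pair_weight f u \<xi> * pair_weight f u \<eta> * (if 2 * \<bar>dot2 u (\<eta> - \<xi>)\<bar> = \<tau> then 1 else 0))
       \<le> (if u = 0 then 2 * (\<Sum>\<xi>\<in>U. (f \<xi>)\<^sup>2)\<^sup>2 else 0)
         + (if u \<noteq> 0 \<and> gcd2 u dvd \<tau> then
              18 * (\<Sum>ab\<in>{1,2,3} \<times> {1,2,3}. offdiag_corr U (dot2 u) (typed_pair_weight C m S f u ab)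
                                              + (\<Sum>\<xi>\<in>U. (pair_weight f u \<xi>)\<^sup>2))
            else 0)"
proof -
  note tau_bound =
    sum_tau_le_corr[where F = "pair_weight f u" and u = u and \<tau> = \<tau>, OF assms(1) pair_weight_nonneg[OF assms(2)]]
  show ?thesis
  proof (cases "u = 0")
    case True
    have "(if gcd2 u dvd \<tau> then 2 * corr U (dot2 u) (pair_weight f u) 0 else 0) \<le> 2 * (\<Sum>\<xi>\<in>U. (f \<xi>)\<^sup>2)\<^sup>2"
      using True by (simp add: corr_pair_weight_zero)
    then show ?thesis
      using order_trans[OF tau_bound] True by simp
  next
    case False
    define T where "T = (\<Sum>ab\<in>{1,2,3} \<times> {1,2,3}. offdiag_corr U (dot2 u) (typed_pair_weight C m S f u ab)
                                                 + (\<Sum>\<xi>\<in>U. (pair_weight f u \<xi>)\<^sup>2))"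
    have "corr U (dot2 u) (pair_weight f u) 0 \<le> 9 * T"
      unfolding T_def by (rule corr_pair_weight_le[OF assms])
    with tau_bound False show ?thesis
      unfolding T_def[symmetric] by (cases "gcd2 u dvd \<tau>") simp_all

  qed
qed

lemma parallelogram_sum_le_rect_sums:
  assumes fin: "\<forall>j\<le>m. finite (S j)" and f0: "\<And>x. f x \<ge> 0"
    and supp: "\<And>x. f x \<noteq> 0 \<Longrightarrow> x \<in> (\<Union>j\<le>m. S j)"
  shows "(\<Sum>Q\<in>{Q \<in> quads_in (\<Union>j\<le>m. S j). is_parallelogram Q \<and> tauQ Q = \<tau>}. fQ f Q)
       \<le> 200 * (Max {rect_sum C m S f \<tau> \<alpha> \<beta> | \<alpha> \<beta>. \<alpha> \<in> {1,2,3::nat} \<and> \<beta> \<in> {1,2,3::nat}}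
                + (\<Sum>\<xi>\<in>(\<Union>j\<le>m. S j). (f \<xi>)\<^sup>2)\<^sup>2)"
proof -
  let ?U = "\<Union>j\<le>m. S j" and ?I = "{1,2,3} \<times> {1,2,3} :: (nat \<times> nat) set"
  define D where "D = (\<lambda>(a, b). b - a) ` (?U \<times> ?U)"
  define V where "V = {u \<in> D. u \<noteq> 0 \<and> gcd2 u dvd \<tau>}"
  define M where "M = Max {rect_sum C m S f \<tau> \<alpha> \<beta> | \<alpha> \<beta>. \<alpha> \<in> {1,2,3::nat} \<and> \<beta> \<in> {1,2,3::nat}}"
  define N where "N = (\<Sum>\<xi>\<in>?U. (f \<xi>)\<^sup>2)\<^sup>2"
  define off where "off u ab = offdiag_corr ?U (dot2 u) (typed_pair_weight C m S f u ab)" for u ab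
  define diag where "diag u = (\<Sum>\<xi>\<in>?U. (pair_weight f u \<xi>)\<^sup>2)" for u
  define T where "T u = (\<Sum>ab\<in>?I. off u ab + diag u)" for u
  have finU: "finite ?U" using fin by simp
  have finV: "finite V" and finD: "finite D" unfolding V_def D_def using finU by simp_all
  have rect_sums: "{rect_sum C m S f \<tau> \<alpha> \<beta> | \<alpha> \<beta>. \<alpha> \<in> {1,2,3::nat} \<and> \<beta> \<in> {1,2,3::nat}}
      = (\<lambda>(\<alpha>, \<beta>). rect_sum C m S f \<tau> \<alpha> \<beta>) ` ?I"
    by auto
  have rect_le_M: "rect_sum C m S f \<tau> \<alpha> \<beta> \<le> M" if "(\<alpha>, \<beta>) \<in> ?I" for \<alpha> \<beta>
    unfolding M_def rect_sums by (rule Max_ge) (use that in force)+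
  have "0 \<le> rect_sum C m S f \<tau> 1 1"
    unfolding rect_sum_def by (intro sum_nonneg fQ_nonneg f0)
  hence M0: "M \<ge> 0" using rect_le_M[of 1 1] by simp
  have N0: "N \<ge> 0" unfolding N_def by simp
  have "(\<Sum>u\<in>V. T u) = (\<Sum>ab\<in>?I. \<Sum>u\<in>V. off u ab) + 9 * (\<Sum>u\<in>V. diag u)"
    unfolding T_def by (simp add: sum.distrib sum.swap[of _ V] sum_distrib_left)
  also have "\<dots> \<le> (\<Sum>ab\<in>?I. M) + 9 * N"
  proof (intro add_mono sum_mono mult_left_mono)
    show "(\<Sum>u\<in>V. off u ab) \<le> M" if "ab \<in> ?I" for ab
      using that rect_le_M[of "fst ab" "snd ab"] V_def finV
        sum_offdiag_corr_le_rect_sum[OF fin f0 supp finV, where \<tau> = \<tau> and C = C and \<alpha> = "fst ab" and \<beta> = "snd ab"]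
      unfolding off_def by fastforce
    show "(\<Sum>u\<in>V. diag u) \<le> N"
      unfolding diag_def N_def using sum_pair_weight_sq_le[OF finU finV supp] .
  qed simp
  finally have typed_bound: "(\<Sum>u\<in>V. T u) \<le> 9 * M + 9 * N" by simp
  have "(\<Sum>Q\<in>{Q \<in> quads_in ?U. is_parallelogram Q \<and> tauQ Q = \<tau>}. fQ f Q)
      \<le> (\<Sum>u\<in>D. \<Sum>\<xi>\<in>?U. \<Sum>\<eta>\<in>?U.
            pair_weight f u \<xi> * pair_weight f u \<eta> * (if 2 * \<bar>dot2 u (\<eta> - \<xi>)\<bar> = \<tau> then 1 else 0))"
    unfolding D_def by (rule parallelogram_sum_le[OF finU f0])
  also have "\<dots> \<le> (\<Sum>u\<in>D. (if u = 0 then 2 * N else 0)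
                        + (if u \<in> V then 18 * T u else 0))"
  proof (rule sum_mono)
    fix u assume "u \<in> D"
    then have V_iff: "u \<in> V \<longleftrightarrow> u \<noteq> 0 \<and> gcd2 u dvd \<tau>" unfolding V_def by simp
    show "(\<Sum>\<xi>\<in>?U. \<Sum>\<eta>\<in>?U.
                 pair_weight f u \<xi> * pair_weight f u \<eta> * (if 2 * \<bar>dot2 u (\<eta> - \<xi>)\<bar> = \<tau> then 1 else 0))
        \<le> (if u = 0 then 2 * N else 0) + (if u \<in> V then 18 * T u else 0)"
      unfolding N_def T_def off_def diag_def using pair_sum_le[OF finU f0, where u = u and \<tau> = \<tau> and C = C and m = m and S = S]
      by (simp only: V_iff)
  qed
  also have "\<dots> = (\<Sum>u\<in>D. if u = 0 then 2 * N else 0) + 18 * (\<Sum>u\<in>V. T u)"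
  proof -
    have "V \<subseteq> D" unfolding V_def by blast
    hence "(\<Sum>u\<in>D. if u \<in> V then 18 * T u else 0) = 18 * (\<Sum>u\<in>V. T u)"
      using sum.inter_restrict[OF finD, of "\<lambda>u. 18 * T u" V] by (simp add: Int_absorb1 sum_distrib_left)
    thus ?thesis by (simp add: sum.distrib)
  qed
  also have "\<dots> \<le> 2 * N + 18 * (9 * M + 9 * N)"
    using typed_bound finD N0 by (intro add_mono) (simp_all add: sum.delta)
  also have "\<dots> \<le> 200 * (M + N)" using M0 N0 by simp
  finally show ?thesis unfolding M_def N_def .
qed

lemma fS_nonneg: "\<forall>j\<le>m. lam j \<ge> 0 \<Longrightarrow> fS m S lam x \<ge> 0"
  unfolding fS_def by (intro sum_nonneg) auto

lemma fS_support: "fS m S lam x \<noteq> 0 \<Longrightarrow> x \<in> (\<Union>j\<le>m. S j)"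
  unfolding fS_def by (rule ccontr) (auto intro: sum.neutral)

theorem mainTheorem5:
  "\<exists>K>0. \<forall>(C::real) (m::nat) (S::nat \<Rightarrow> pt2 set) (lam::nat \<Rightarrow> real) (\<tau>::int).
     C \<ge> 0 \<longrightarrow> m \<ge> 1 \<longrightarrow>
     (\<forall>j\<le>m. finite (S j) \<and> card (S j) \<le> 2 ^ j) \<longrightarrow>
     (\<forall>i\<le>m. \<forall>j\<le>m. i \<noteq> j \<longrightarrow> S i \<inter> S j = {}) \<longrightarrow>
     (\<forall>j\<le>m. lam j \<ge> 0) \<longrightarrow>
     (\<forall>j\<le>m. \<forall>\<xi>\<in>S j. \<forall>l l'. is_line l \<and> is_line l' \<and> rpt \<xi> \<in> l \<and> rpt \<xi> \<in> l'
         \<and> real (lat_count l (S j)) \<ge> 2 powr (real j / 2 + C)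
         \<and> real (lat_count l' (S j)) \<ge> 2 powr (real j / 2 + C) \<longrightarrow> l = l') \<longrightarrow>
     \<tau> \<ge> 0 \<longrightarrow>
     (let U = (\<Union>j\<le>m. S j); f = fS m S lam in
       (\<Sum>Q\<in>{Q\<in>quads_in U. is_parallelogram Q \<and> tauQ Q = \<tau>}. fQ f Q)
       \<le> K * (Max {(\<Sum>Q\<in>{Q\<in>Q0_ab C m S \<alpha> \<beta>. gcd2 (fst Q - snd (snd (snd Q))) dvd \<tau>}. fQ f Q)
                   | \<alpha> \<beta>. \<alpha> \<in> {1,2,3::nat} \<and> \<beta> \<in> {1,2,3::nat}}
                + (\<Sum>\<xi>\<in>U. (f \<xi>)\<^sup>2)\<^sup>2))"
  unfolding Let_def
  apply (intro exI[of _ "200::real"] conjI allI impI)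
   apply simp
  subgoal premises hyps for C m S lam \<tau>
    using hyps(3,5) by (intro parallelogram_sum_le_rect_sums[unfolded rect_sum_def] fS_nonneg fS_support) auto
  done

end
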